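(* Let $\alpha\ge0$ satisfy $\alpha^2+\alpha V^0-\gamma<0$, let $u_0\in C_\alpha$, and let $(s,u)$ be the solution of the free-interface problem with initial data $u_0$. Then for all $t>0$ $$|T_2(t)u_0|_\alpha\le 2\exp[(-\gamma+\alpha^2+\alpha V^0)t]\,|u_0|_\alpha .$$
   Context: Fix $\gamma>0$, $0<v_0\le V^0$. The kinetics $g:[0,\infty)\to\mathbb{R}$ is monotonically decreasing, differentiable, $|g'|\le C$, $-V^0\le g\le -v_0$. Free-interface problem: find $s(t)$, $s(0)=0$, and $u(x,t)$ with $u_t=u_{xx}-\gamma u$ for $x\ne s(t)$, $t>0$; $u(x,0)=u_0(x)$; $g(u(s(t),t))=v(t)$; $u_x^+(s(t),t)-u_x^-(s(t),t)=v(t)$, with $v=s'$, $u_x^\pm$ one-sided derivatives from right/left, $u\to0$ at $\pm\infty$; the classical solution exists and is unique, and $-V^0\le v(t)\le -v_0$. With $G(x,t,\xi,\tau)=[4\pi(t-\tau)]^{-1/2}\exp\{-(x-\xi)^2/(4(t-\tau))\}$, define $(T_2(t)u_0)(x)=e^{-\gamma t}\int_{-\infty}^{\infty}G(x,t,\xi,0)u_0(\xi)d\xi$. Weighted norms: $|f|_\alpha=\sup_x e^{\alpha|x|}|f(x)|$, $C_\alpha=\{f\in C(\mathbb{R}):|f|_\alpha<\infty\}$; for a function $f(\cdot,t)$ at time $t$ associated with the solution (such as $T_2(t)u_0$), $|f(\cdot,t)|_\alpha:=\sup_x e^{\alpha|x-s(t)|}|f(x,t)|$ (weight centred at the interface),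 while $|u_0|_\alpha$ uses the weight centred at $0$. *)

theory Defs
  imports "HOL-Analysis.Analysis"
begin

definition heatG :: "real \<Rightarrow> real \<Rightarrow> real \<Rightarrow> real \<Rightarrow> real" where
  "heatG x t \<xi> \<tau> = (1 / sqrt (4 * pi * (t - \<tau>))) * exp (- ((x - \<xi>)^2) / (4 * (t - \<tau>)))"

definition T2 :: "real \<Rightarrow> real \<Rightarrow> (real \<Rightarrow> real) \<Rightarrow> real \<Rightarrow> real" where
  "T2 \<gamma> t u0 x = exp (- \<gamma> * t) * integral UNIV (\<lambda>\<xi>. heatG x t \<xi> 0 * u0 \<xi>)"

definition wnorm :: "real \<Rightarrow> real \<Rightarrow> (real \<Rightarrow> real) \<Rightarrow> real" where
  "wnorm \<alpha> c f = (SUP x. exp (\<alpha> * \<bar>x - c\<bar>) * \<bar>f x\<bar>)"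

definition C_alpha :: "real \<Rightarrow> (real \<Rightarrow> real) set" where
  "C_alpha \<alpha> = {f. continuous_on UNIV f \<and> bdd_above (range (\<lambda>x. exp (\<alpha> * \<bar>x\<bar>) * \<bar>f x\<bar>))}"

definition kinetics_ok :: "(real \<Rightarrow> real) \<Rightarrow> real \<Rightarrow> real \<Rightarrow> real \<Rightarrow> bool" where
  "kinetics_ok g C v0 V0 \<longleftrightarrow>
     antimono_on {0..} g \<and>
     (\<exists>g'. \<forall>y\<ge>0. (g has_real_derivative g' y) (at y within {0..}) \<and> \<bar>g' y\<bar> \<le> C) \<and>
     (\<forall>y\<ge>0. - V0 \<le> g y \<and> g y \<le> - v0)"

text \<open>Classical solution (s,u) of the free-interface problem with data u0;
  u is written as u x t, and v = s'.\<close>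
definition free_interface_solution ::
  "(real \<Rightarrow> real) \<Rightarrow> real \<Rightarrow> (real \<Rightarrow> real) \<Rightarrow> (real \<Rightarrow> real) \<Rightarrow> (real \<Rightarrow> real \<Rightarrow> real) \<Rightarrow> bool" where
  "free_interface_solution g \<gamma> u0 s u \<longleftrightarrow>
     s 0 = 0 \<and> continuous_on {0..} s \<and>
     continuous_on (UNIV \<times> {0..}) (\<lambda>(x,t). u x t) \<and>
     (\<forall>x. u x 0 = u0 x) \<and>
     (\<exists>v ux uxx ut uxp uxm.
        (\<forall>t>0. (s has_real_derivative v t) (at t)) \<and>
        (\<forall>t>0. \<forall>x. x \<noteq> s t \<longrightarrow>
            ((\<lambda>y. u y t) has_real_derivative ux x t) (at x) \<and>
            ((\<lambda>y. ux y t) has_real_derivative uxx x t) (at x) \<and>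
            ((\<lambda>\<tau>. u x \<tau>) has_real_derivative ut x t) (at t) \<and>
            ut x t = uxx x t - \<gamma> * u x t) \<and>
        (\<forall>t>0. u (s t) t \<ge> 0 \<and> g (u (s t) t) = v t) \<and>
        (\<forall>t>0. ((\<lambda>y. u y t) has_real_derivative uxp t) (at (s t) within {s t..}) \<and>
               ((\<lambda>y. u y t) has_real_derivative uxm t) (at (s t) within {..s t}) \<and>
               uxp t - uxm t = v t) \<and>
        (\<forall>t>0. ((\<lambda>x. u x t) \<longlongrightarrow> 0) at_top \<and> ((\<lambda>x. u x t) \<longlongrightarrow> 0) at_bot))"

end

theory Submission
  imports Defs "HOL-Probability.Distributions"
begin

text \<open>
  Bound the data by \<open>|u0 \<xi>| \<le> M exp (-\<alpha>|\<xi>|)\<close> and split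
  \<open>exp (\<alpha>|x|) exp (-\<alpha>|\<xi>|) \<le> exp (\<alpha>|x - \<xi>|) \<le> exp (\<alpha>(x - \<xi>)) + exp (-\<alpha>(x - \<xi>))\<close>.
  Each exponential integrates against the heat kernel of time \<open>t\<close> to \<open>exp (\<alpha>\<^sup>2 t)\<close>,
  so the free heat flow enlarges the \<open>\<alpha>\<close>-weighted norm by at most \<open>2 exp (\<alpha>\<^sup>2 t)\<close>.
  Moving the centre of the weight from \<open>0\<close> to the interface costs \<open>exp (\<alpha>|s t|)\<close>, and
  \<open>|s t| \<le> V0 t\<close> since the interface speed \<open>g (u (s t) t)\<close> lies in \<open>[-V0, -v0]\<close>.
\<close>

lemma heatG_eq_normal_density:
  assumes "t > 0"
  shows "heatG x t \<xi> 0 = normal_density x (sqrt (2 * t)) \<xi>"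
  using assms unfolding heatG_def normal_density_def
  by (simp add: power2_eq_square algebra_simps)

lemma heatG_nonneg: "t > 0 \<Longrightarrow> heatG x t \<xi> 0 \<ge> 0"
  by (simp add: heatG_eq_normal_density)

lemma heatG_has_integral_1:
  assumes "t > 0"
  shows "((\<lambda>\<xi>. heatG x t \<xi> 0) has_integral 1) UNIV"
proof -
  have "sqrt (2 * t) > 0" using assms by simp
  then have "(normal_density x (sqrt (2 * t)) has_integral 1) UNIV"
    using has_integral_integral_real[OF integrable_normal_density] integral_normal_density
    by metis
  then show ?thesis
    by (simp add: heatG_eq_normal_density[OF assms])
qed

lemma heatG_exp_has_integral:
  assumes "t > 0"
  shows "((\<lambda>\<xi>. heatG x t \<xi> 0 * exp (a * (x - \<xi>))) has_integral exp (a^2 * t)) UNIV"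
proof -
  \<comment> \<open>completing the square in the exponent\<close>
  have shift: "heatG x t \<xi> 0 * exp (a * (x - \<xi>)) = exp (a^2 * t) * heatG (x - 2*a*t) t \<xi> 0" for \<xi>
  proof -
    have "- ((x - \<xi>)^2) / (4 * (t - 0)) + a * (x - \<xi>)
            = a^2 * t + - ((x - 2*a*t - \<xi>)^2) / (4 * (t - 0))"
      using assms by (simp add: field_simps power2_eq_square)
    then show ?thesis
      unfolding heatG_def by (simp add: exp_add[symmetric] mult_exp_exp)
  qed
  show ?thesis
    unfolding shift
    using has_integral_mult_right[OF heatG_has_integral_1[OF assms], of "exp (a^2 * t)"]
    by simp
qed

lemma exp_neg_abs_le_exp_sum:
  fixes \<alpha> x \<xi> :: real
  assumes "\<alpha> \<ge> 0"
  shows "exp (- \<alpha> * \<bar>\<xi>\<bar>) \<le> exp (- \<alpha> * \<bar>x\<bar>) * (exp (\<alpha> * (x - \<xi>)) + exp (- \<alpha> * (x - \<xi>)))"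
proof -
  have "\<alpha> * (\<bar>x\<bar> - \<bar>\<xi>\<bar>) \<le> \<alpha> * \<bar>x - \<xi>\<bar>"
    using assms abs_triangle_ineq2[of x \<xi>] by (rule mult_left_mono[rotated])
  then have "exp (- \<alpha> * \<bar>\<xi>\<bar>) \<le> exp (- \<alpha> * \<bar>x\<bar>) * exp (\<alpha> * \<bar>x - \<xi>\<bar>)"
    by (simp add: exp_add[symmetric] algebra_simps)
  also have "exp (\<alpha> * \<bar>x - \<xi>\<bar>) \<le> exp (\<alpha> * (x - \<xi>)) + exp (- \<alpha> * (x - \<xi>))"
  proof (cases "\<xi> \<le> x")
    case True
    then show ?thesis by (simp add: add_increasing2 less_imp_le)
  next
    case False
    then have "exp (\<alpha> * \<bar>x - \<xi>\<bar>) = exp (- \<alpha> * (x - \<xi>))" by (simp add: algebra_simps)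
    then show ?thesis by (simp add: add_increasing less_imp_le)
  qed
  finally show ?thesis by simp
qed

lemma heat_integral_weighted_le:
  fixes f :: "real \<Rightarrow> real"
  assumes "t > 0" and "\<alpha> \<ge> 0" and weighted_f: "\<And>\<xi>. exp (\<alpha> * \<bar>\<xi>\<bar>) * \<bar>f \<xi>\<bar> \<le> M"
  shows "exp (\<alpha> * \<bar>x\<bar>) * \<bar>integral UNIV (\<lambda>\<xi>. heatG x t \<xi> 0 * f \<xi>)\<bar> \<le> 2 * exp (\<alpha>^2 * t) * M"
proof -
  have "0 \<le> exp (\<alpha> * \<bar>0\<bar>) * \<bar>f 0\<bar>" by simp
  then have "M \<ge> 0" using weighted_f[of 0] by linarith
  define E where "E = M * exp (- \<alpha> * \<bar>x\<bar>)"
  have "E \<ge> 0" using \<open>M \<ge> 0\<close> by (simp add: E_def)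
  define B where "B \<xi> = E * (heatG x t \<xi> 0 * exp (\<alpha> * (x - \<xi>)) + heatG x t \<xi> 0 * exp (- \<alpha> * (x - \<xi>)))" for \<xi>
  have "((\<lambda>\<xi>. heatG x t \<xi> 0 * exp (\<alpha> * (x - \<xi>)) + heatG x t \<xi> 0 * exp (- \<alpha> * (x - \<xi>)))
          has_integral exp (\<alpha>^2 * t) + exp ((- \<alpha>)^2 * t)) UNIV"
    by (intro has_integral_add heatG_exp_has_integral \<open>t > 0\<close>)
  from has_integral_mult_right[OF this, of E]
  have B_integral: "(B has_integral E * (2 * exp (\<alpha>^2 * t))) UNIV"
    unfolding B_def by simp
  have f_le_B: "norm (heatG x t \<xi> 0 * f \<xi>) \<le> B \<xi>" for \<xi>
  proof -
    have "\<bar>f \<xi>\<bar> = exp (- \<alpha> * \<bar>\<xi>\<bar>) * (exp (\<alpha> * \<bar>\<xi>\<bar>) * \<bar>f \<xi>\<bar>)"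
      by (simp add: mult.assoc[symmetric] exp_add[symmetric])
    also have "\<dots> \<le> exp (- \<alpha> * \<bar>\<xi>\<bar>) * M"
      using weighted_f by (simp add: mult_left_mono)
    also have "\<dots> \<le> E * (exp (\<alpha> * (x - \<xi>)) + exp (- \<alpha> * (x - \<xi>)))"
      unfolding E_def using exp_neg_abs_le_exp_sum[OF \<open>\<alpha> \<ge> 0\<close>, of \<xi> x] \<open>M \<ge> 0\<close>
      by (metis mult.assoc mult.commute mult_left_mono)
    finally have "\<bar>f \<xi>\<bar> \<le> E * (exp (\<alpha> * (x - \<xi>)) + exp (- \<alpha> * (x - \<xi>)))" .
    then have "heatG x t \<xi> 0 * \<bar>f \<xi>\<bar> \<le> heatG x t \<xi> 0 * (E * (exp (\<alpha> * (x - \<xi>)) + exp (- \<alpha> * (x - \<xi>))))"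
      using heatG_nonneg[OF \<open>t > 0\<close>] by (rule mult_left_mono)
    then show ?thesis
      using heatG_nonneg[OF \<open>t > 0\<close>] by (simp add: B_def abs_mult algebra_simps)
  qed
  have "\<bar>integral UNIV (\<lambda>\<xi>. heatG x t \<xi> 0 * f \<xi>)\<bar> \<le> E * (2 * exp (\<alpha>^2 * t))"
  proof (cases "(\<lambda>\<xi>. heatG x t \<xi> 0 * f \<xi>) integrable_on UNIV")
    case True
    have "norm (integral UNIV (\<lambda>\<xi>. heatG x t \<xi> 0 * f \<xi>)) \<le> integral UNIV B"
      using True B_integral f_le_B by (blast intro: integral_norm_bound_integral)
    then show ?thesis using B_integral integral_unique by (metis real_norm_def)
  next
    case False
    then show ?thesis using \<open>E \<ge> 0\<close> by (simp add: not_integrable_integral)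
  qed
  then have "exp (\<alpha> * \<bar>x\<bar>) * \<bar>integral UNIV (\<lambda>\<xi>. heatG x t \<xi> 0 * f \<xi>)\<bar>
               \<le> exp (\<alpha> * \<bar>x\<bar>) * (E * (2 * exp (\<alpha>^2 * t)))"
    by (simp add: mult_left_mono)
  also have "\<dots> = 2 * exp (\<alpha>^2 * t) * M"
    by (simp add: E_def exp_minus field_simps)
  finally show ?thesis .
qed

lemma T2_weighted_le:
  fixes u0 :: "real \<Rightarrow> real"
  assumes "t > 0" and "\<alpha> \<ge> 0" and "\<bar>c\<bar> \<le> V * t"
    and "\<And>\<xi>. exp (\<alpha> * \<bar>\<xi>\<bar>) * \<bar>u0 \<xi>\<bar> \<le> M"
  shows "exp (\<alpha> * \<bar>x - c\<bar>) * \<bar>T2 \<gamma> t u0 x\<bar> \<le> 2 * exp ((- \<gamma> + \<alpha>^2 + \<alpha> * V) * t) * M"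
proof -
  define I where "I = integral UNIV (\<lambda>\<xi>. heatG x t \<xi> 0 * u0 \<xi>)"
  have "\<alpha> * \<bar>x - c\<bar> \<le> \<alpha> * (\<bar>x\<bar> + V * t)"
    using \<open>\<alpha> \<ge> 0\<close> \<open>\<bar>c\<bar> \<le> V * t\<close> abs_triangle_ineq4[of x c] by (intro mult_left_mono) auto
  then have "exp (\<alpha> * \<bar>x - c\<bar>) \<le> exp (\<alpha> * V * t) * exp (\<alpha> * \<bar>x\<bar>)"
    by (simp add: exp_add[symmetric] algebra_simps)
  moreover have "\<bar>T2 \<gamma> t u0 x\<bar> = exp (- \<gamma> * t) * \<bar>I\<bar>"
    unfolding T2_def I_def by (simp add: abs_mult)
  ultimately have "exp (\<alpha> * \<bar>x - c\<bar>) * \<bar>T2 \<gamma> t u0 x\<bar>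
               \<le> exp (\<alpha> * V * t) * exp (\<alpha> * \<bar>x\<bar>) * (exp (- \<gamma> * t) * \<bar>I\<bar>)"
    by (simp add: mult_right_mono)
  also have "\<dots> = exp (\<alpha> * V * t) * exp (- \<gamma> * t) * (exp (\<alpha> * \<bar>x\<bar>) * \<bar>I\<bar>)"
    by (simp only: mult_ac)
  also have "\<dots> \<le> exp (\<alpha> * V * t) * exp (- \<gamma> * t) * (2 * exp (\<alpha>^2 * t) * M)"
    unfolding I_def using heat_integral_weighted_le assms by (simp add: mult_left_mono)
  also have "\<dots> = 2 * exp ((- \<gamma> + \<alpha>^2 + \<alpha> * V) * t) * M"
    by (simp add: exp_add[symmetric] algebra_simps)
  finally show ?thesis .
qed

lemma interface_position_bounds:
  assumes "kinetics_ok g C v0 V0" and "free_interface_solution g \<gamma> u0 s u" and "t > 0"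
  shows "- V0 * t \<le> s t \<and> s t \<le> - v0 * t"
proof -
  obtain v where "s 0 = 0" and "continuous_on {0..} s"
    and s_deriv: "\<And>t. t > 0 \<Longrightarrow> (s has_real_derivative v t) (at t)"
    and speed: "\<And>t. t > 0 \<Longrightarrow> u (s t) t \<ge> 0 \<and> g (u (s t) t) = v t"
    using assms(2) unfolding free_interface_solution_def by blast
  have g_range: "\<And>y. y \<ge> 0 \<Longrightarrow> - V0 \<le> g y \<and> g y \<le> - v0"
    using assms(1) unfolding kinetics_ok_def by blast
  have "continuous_on {0..t} s"
    using \<open>continuous_on {0..} s\<close> by (rule continuous_on_subset) auto
  moreover have "\<forall>x. 0 < x \<and> x < t \<longrightarrow> s differentiable (at x)"
    using s_deriv real_differentiable_def by blast
  ultimately obtain l z where "0 < z" and "DERIV s z :> l" and "s t - s 0 = (t - 0) * l"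
    using MVT[OF \<open>t > 0\<close>] by blast
  then have "s t = t * v z"
    using \<open>s 0 = 0\<close> DERIV_unique[OF _ s_deriv[OF \<open>0 < z\<close>]] by auto
  have "- V0 \<le> v z \<and> v z \<le> - v0"
    using speed g_range \<open>0 < z\<close> by metis
  then have "t * (- V0) \<le> t * v z \<and> t * v z \<le> t * (- v0)"
    using \<open>t > 0\<close> by (intro conjI mult_left_mono) auto
  with \<open>s t = t * v z\<close> show ?thesis by (simp add: mult.commute)
qed

lemma C_alpha_weighted_le_wnorm:
  assumes "f \<in> C_alpha \<alpha>"
  shows "exp (\<alpha> * \<bar>x\<bar>) * \<bar>f x\<bar> \<le> wnorm \<alpha> 0 f"
  using assms unfolding C_alpha_def wnorm_def by (auto intro: cSUP_upper)

lemma wnorm_le_of_weighted_le: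
  assumes "\<And>x. exp (\<alpha> * \<bar>x - c\<bar>) * \<bar>f x\<bar> \<le> K"
  shows "bdd_above (range (\<lambda>x. exp (\<alpha> * \<bar>x - c\<bar>) * \<bar>f x\<bar>)) \<and> wnorm \<alpha> c f \<le> K"
proof
  show "bdd_above (range (\<lambda>x. exp (\<alpha> * \<bar>x - c\<bar>) * \<bar>f x\<bar>))"
    using assms by (intro bdd_aboveI2)
  show "wnorm \<alpha> c f \<le> K"
    unfolding wnorm_def using assms by (intro cSUP_least) auto
qed

theorem mainTheorem3:
  fixes g :: "real \<Rightarrow> real" and \<gamma> v0 V0 C \<alpha> :: real
    and u0 s :: "real \<Rightarrow> real" and u :: "real \<Rightarrow> real \<Rightarrow> real"
  assumes "\<gamma> > 0" and "0 < v0" and "v0 \<le> V0"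
    and "kinetics_ok g C v0 V0"
    and "\<alpha> \<ge> 0" and "\<alpha>^2 + \<alpha> * V0 - \<gamma> < 0"
    and "u0 \<in> C_alpha \<alpha>"
    and "free_interface_solution g \<gamma> u0 s u"
    and "t > 0"
  shows "bdd_above (range (\<lambda>x. exp (\<alpha> * \<bar>x - s t\<bar>) * \<bar>T2 \<gamma> t u0 x\<bar>)) \<and>
         wnorm \<alpha> (s t) (T2 \<gamma> t u0)
           \<le> 2 * exp ((- \<gamma> + \<alpha>^2 + \<alpha> * V0) * t) * wnorm \<alpha> 0 u0"
proof (rule wnorm_le_of_weighted_le)
  have "- V0 * t \<le> s t" and "s t \<le> - v0 * t"
    using interface_position_bounds[OF assms(4,8,9)] by auto
  moreover have "v0 * t > 0" using \<open>0 < v0\<close> \<open>t > 0\<close> by simp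
  ultimately have "\<bar>s t\<bar> \<le> V0 * t" by (simp add: abs_le_iff)
  then show "exp (\<alpha> * \<bar>x - s t\<bar>) * \<bar>T2 \<gamma> t u0 x\<bar>
               \<le> 2 * exp ((- \<gamma> + \<alpha>^2 + \<alpha> * V0) * t) * wnorm \<alpha> 0 u0" for x
    by (rule T2_weighted_le[OF \<open>t > 0\<close> \<open>\<alpha> \<ge> 0\<close> _ C_alpha_weighted_le_wnorm[OF assms(7)]])
qed

end
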